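(* If $L_1$ is a context-free language and $L_2$ is a regular language (over the same finite alphabet), then $L_1 \leftarrow L_2$ and $L_2 \leftarrow L_1$ are context-free.
   Context: Outfix-guided insertion: $x \leftarrow y = \{ x_1 u z v x_2 \mid x = x_1 u v x_2,\ y = u z v,\ u \neq \varepsilon,\ v \neq \varepsilon \}$; for languages, $L_1 \leftarrow L_2 = \bigcup_{x \in L_1, y \in L_2} x \leftarrow y$. *)

theory Defs
  imports Main
begin

definition outfix_ins :: "'a list \<Rightarrow> 'a list \<Rightarrow> 'a list set" where
  "outfix_ins x y = {x1 @ u @ z @ v @ x2 | x1 u z v x2.
      x = x1 @ u @ v @ x2 \<and> y = u @ z @ v \<and> u \<noteq> [] \<and> v \<noteq> []}"

definition outfix_ins_lang :: "'a list set \<Rightarrow> 'a list set \<Rightarrow> 'a list set" where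
  "outfix_ins_lang L1 L2 = (\<Union>x\<in>L1. \<Union>y\<in>L2. outfix_ins x y)"

definition regular_lang :: "('a::finite) list set \<Rightarrow> bool" where
  "regular_lang L \<longleftrightarrow> (\<exists>(Q::nat set) q0 (\<delta>::nat \<Rightarrow> 'a \<Rightarrow> nat) F.
      finite Q \<and> q0 \<in> Q \<and> (\<forall>q\<in>Q. \<forall>a. \<delta> q a \<in> Q) \<and> F \<subseteq> Q \<and>
      L = {w. foldl \<delta> q0 w \<in> F})"

section \<open>Context-free languages (CFG: terminals Inl, nonterminals Inr nat)\<close>

definition cfg_step :: "(nat \<times> ('a + nat) list) set \<Rightarrow> ('a + nat) list \<Rightarrow> ('a + nat) list \<Rightarrow> bool" where
  "cfg_step P u v \<longleftrightarrow> (\<exists>\<alpha> \<beta> A r. u = \<alpha> @ [Inr A] @ \<beta> \<and> (A, r) \<in> P \<and> v = \<alpha> @ r @ \<beta>)"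

definition cfg_lang :: "(nat \<times> ('a + nat) list) set \<Rightarrow> nat \<Rightarrow> 'a list set" where
  "cfg_lang P S = {w. (cfg_step P)\<^sup>*\<^sup>* [Inr S] (map Inl w)}"

definition context_free :: "('a::finite) list set \<Rightarrow> bool" where
  "context_free L \<longleftrightarrow> (\<exists>P S. finite P \<and> L = cfg_lang P S)"

end

theory Submission
  imports Defs "HOL-Library.Countable"
begin

text \<open>Tag every letter of a word \<open>x\<^sub>1 u z v x\<^sub>2\<close> with the factor it lies in. The tagged words of the
  shape \<open>X1\<^sup>* U\<^sup>+ Z\<^sup>* V\<^sup>+ X2\<^sup>*\<close> form a regular set; erasing the \<open>Z\<close>-letters of such a word gives
  \<open>x\<^sub>1 u v x\<^sub>2\<close>, erasing the \<open>X1\<close>- and \<open>X2\<close>-letters gives \<open>u z v\<close>, and dropping the tags gives the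
  inserted word. So \<open>L\<^sub>1 \<leftarrow> L\<^sub>2\<close> is the untagged image of the tagged words whose first erasure lies in
  \<open>L\<^sub>1\<close> and whose second lies in \<open>L\<^sub>2\<close>, and \<open>L\<^sub>2 \<leftarrow> L\<^sub>1\<close> is the same with the erasures swapped.
  Context-free languages are closed under inverse images of such erasing codings, under intersection with
  regular languages (the triple construction), and under letter-to-letter images.\<close>

section \<open>Derivations\<close>

inductive derives :: "('n \<times> ('t + 'n) list) set \<Rightarrow> ('t + 'n) list \<Rightarrow> 't list \<Rightarrow> bool" for P where
  derives_Nil: "derives P [] []"
| derives_Inl: "derives P \<alpha> w \<Longrightarrow> derives P (Inl a # \<alpha>) (a # w)"
| derives_Inr: "(A, r) \<in> P \<Longrightarrow> derives P r w1 \<Longrightarrow> derives P \<alpha> w2 \<Longrightarrow> derives P (Inr A # \<alpha>) (w1 @ w2)"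

lemma derives_Nil_iff [simp]: "derives P [] w \<longleftrightarrow> w = []"
  by (auto elim: derives.cases intro: derives_Nil)

lemma derives_Cons_Inl_iff:
  "derives P (Inl a # \<alpha>) w \<longleftrightarrow> (\<exists>w'. w = a # w' \<and> derives P \<alpha> w')"
  by (auto elim: derives.cases intro: derives_Inl)

lemma derives_Cons_Inr_iff:
  "derives P (Inr A # \<alpha>) w \<longleftrightarrow> (\<exists>r w1 w2. (A, r) \<in> P \<and> w = w1 @ w2 \<and> derives P r w1 \<and> derives P \<alpha> w2)"
  by (rule iffI, erule derives.cases) (auto intro: derives_Inr)

lemma derives_append_iff:
  "derives P (\<alpha> @ \<beta>) w \<longleftrightarrow> (\<exists>w1 w2. w = w1 @ w2 \<and> derives P \<alpha> w1 \<and> derives P \<beta> w2)"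
proof (induction \<alpha> arbitrary: w)
  case (Cons s \<alpha>)
  show ?case
  proof (cases s)
    case (Inl a)
    have "(\<exists>w'. w = a # w' \<and> (\<exists>w1 w2. w' = w1 @ w2 \<and> derives P \<alpha> w1 \<and> derives P \<beta> w2)) \<longleftrightarrow>
        (\<exists>w1 w2. w = w1 @ w2 \<and> (\<exists>w'. w1 = a # w' \<and> derives P \<alpha> w') \<and> derives P \<beta> w2)"
      by (metis append_Cons)
    with Inl show ?thesis by (simp add: derives_Cons_Inl_iff Cons.IH)
  next
    case (Inr A)
    have "(\<exists>r w1 w2. (A, r) \<in> P \<and> w = w1 @ w2 \<and> derives P r w1 \<and>
          (\<exists>v1 v2. w2 = v1 @ v2 \<and> derives P \<alpha> v1 \<and> derives P \<beta> v2)) \<longleftrightarrow>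
        (\<exists>w1 w2. w = w1 @ w2 \<and> (\<exists>r v1 v2. (A, r) \<in> P \<and> w1 = v1 @ v2 \<and> derives P r v1 \<and> derives P \<alpha> v2) \<and>
          derives P \<beta> w2)"
      by (metis append_assoc)
    with Inr show ?thesis by (simp add: derives_Cons_Inr_iff Cons.IH)
  qed
qed simp

lemma derives_append: "derives P \<alpha> w1 \<Longrightarrow> derives P \<beta> w2 \<Longrightarrow> derives P (\<alpha> @ \<beta>) (w1 @ w2)"
proof (induction rule: derives.induct)
  case (derives_Inr A r w1 \<alpha> w2)
  then show ?case by (metis append_Cons append_assoc derives.derives_Inr)
qed (auto intro: derives.intros)

lemma derives_single_Inr_iff:
  "derives P [Inr A] w \<longleftrightarrow> (\<exists>r. (A, r) \<in> P \<and> derives P r w)"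
  by (simp add: derives_Cons_Inr_iff)

lemma derives_map_Inl_iff [simp]: "derives P (map Inl u) w \<longleftrightarrow> w = u"
  by (induction u arbitrary: w) (auto simp: derives_Cons_Inl_iff)

lemma cfg_steps_in_context:
  "(cfg_step P)\<^sup>*\<^sup>* u v \<Longrightarrow> (cfg_step P)\<^sup>*\<^sup>* (x @ u @ y) (x @ v @ y)"
proof (induction rule: rtranclp_induct)
  case (step v v')
  then obtain \<alpha> \<beta> A r where "v = \<alpha> @ [Inr A] @ \<beta>" "(A, r) \<in> P" "v' = \<alpha> @ r @ \<beta>"
    by (auto simp: cfg_step_def)
  then have "cfg_step P (x @ v @ y) (x @ v' @ y)"
    unfolding cfg_step_def by (metis append_assoc)
  with step.IH show ?case by simp
qed simp

lemma derives_imp_cfg_steps: "derives P \<alpha> w \<Longrightarrow> (cfg_step P)\<^sup>*\<^sup>* \<alpha> (map Inl w)"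
proof (induction rule: derives.induct)
  case (derives_Inl \<alpha> w a)
  then show ?case using cfg_steps_in_context[of P _ _ "[Inl a]" "[]"] by simp
next
  case (derives_Inr A r w1 \<alpha> w2)
  have "cfg_step P (Inr A # \<alpha>) (r @ \<alpha>)"
    unfolding cfg_step_def using derives_Inr(1) by force
  also have "(cfg_step P)\<^sup>*\<^sup>* (r @ \<alpha>) (map Inl w1 @ \<alpha>)"
    using cfg_steps_in_context[OF derives_Inr.IH(1), of "[]" \<alpha>] by simp
  also have "(cfg_step P)\<^sup>*\<^sup>* (map Inl w1 @ \<alpha>) (map Inl w1 @ map Inl w2)"
    using cfg_steps_in_context[OF derives_Inr.IH(2), of "map Inl w1" "[]"] by simp
  finally show ?case by simp
qed simp

lemma cfg_steps_derives_trans: "(cfg_step P)\<^sup>*\<^sup>* \<alpha> \<beta> \<Longrightarrow> derives P \<beta> w \<Longrightarrow> derives P \<alpha> w"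
proof (induction rule: converse_rtranclp_induct)
  case (step \<gamma> \<delta>)
  then obtain \<alpha>1 \<alpha>2 A r where "\<gamma> = \<alpha>1 @ [Inr A] @ \<alpha>2" "(A, r) \<in> P" "\<delta> = \<alpha>1 @ r @ \<alpha>2"
    by (auto simp: cfg_step_def)
  with step.IH step.prems show ?case
    by (auto simp: derives_append_iff derives_Cons_Inr_iff) blast
qed

lemma cfg_lang_eq_derives: "cfg_lang P S = {w. derives P [Inr S] w}"
  unfolding cfg_lang_def
  using derives_imp_cfg_steps cfg_steps_derives_trans derives_map_Inl_iff by blast

section \<open>Renaming nonterminals and mapping letters\<close>

definition map_grammar ::
    "('t \<Rightarrow> 's) \<Rightarrow> ('n \<Rightarrow> 'm) \<Rightarrow> ('n \<times> ('t + 'n) list) set \<Rightarrow> ('m \<times> ('s + 'm) list) set" where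
  "map_grammar f g P = (\<lambda>(A, r). (g A, map (map_sum f g) r)) ` P"

lemma derives_map_grammar:
  "derives P \<alpha> w \<Longrightarrow> derives (map_grammar f g P) (map (map_sum f g) \<alpha>) (map f w)"
proof (induction rule: derives.induct)
  case (derives_Inr A r w1 \<alpha> w2)
  have "(g A, map (map_sum f g) r) \<in> map_grammar f g P"
    using derives_Inr(1) unfolding map_grammar_def by force
  with derives_Inr.IH show ?case by (auto intro: derives.derives_Inr)
qed (auto intro: derives.intros)

lemma Inl_eq_map_sum_iff: "Inl a = map_sum f g x \<longleftrightarrow> (\<exists>c. x = Inl c \<and> a = f c)"
  by (cases x) auto

lemma Inr_eq_map_sum_iff: "Inr B = map_sum f g x \<longleftrightarrow> (\<exists>A. x = Inr A \<and> B = g A)"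
  by (cases x) auto

lemma derives_map_grammar_inv:
  assumes "derives (map_grammar f g P) \<beta> v" "inj g" "\<beta> = map (map_sum f g) \<alpha>"
  shows "\<exists>w. v = map f w \<and> derives P \<alpha> w"
  using assms(1,3)
proof (induction arbitrary: \<alpha> rule: derives.induct)
  case (derives_Inl \<beta> v a)
  then obtain c \<alpha>' where \<alpha>: "\<alpha> = Inl c # \<alpha>'" "a = f c" "\<beta> = map (map_sum f g) \<alpha>'"
    by (auto simp: Cons_eq_map_conv Inl_eq_map_sum_iff)
  with derives_Inl.IH obtain w where "v = map f w" "derives P \<alpha>' w" by blast
  with \<alpha> show ?case by (metis derives.derives_Inl list.map(2))
next
  case (derives_Inr B r v1 \<beta> v2)
  then obtain A \<alpha>' where \<alpha>: "\<alpha> = Inr A # \<alpha>'" "B = g A" "\<beta> = map (map_sum f g) \<alpha>'"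
    by (auto simp: Cons_eq_map_conv Inr_eq_map_sum_iff)
  from derives_Inr(1) obtain A' r0 where "(A', r0) \<in> P" "g A' = B" "r = map (map_sum f g) r0"
    unfolding map_grammar_def by auto
  moreover from \<open>g A' = B\<close> \<alpha>(2) assms(2) have "A' = A" by (simp add: inj_eq)
  ultimately have "(A, r0) \<in> P" by simp
  obtain w1 w2 where "v1 = map f w1" "derives P r0 w1" "v2 = map f w2" "derives P \<alpha>' w2"
    using derives_Inr.IH \<alpha>(3) \<open>r = _\<close> by blast
  moreover have "derives P \<alpha> (w1 @ w2)"
    using \<alpha>(1) derives.derives_Inr[OF \<open>(A, r0) \<in> P\<close> \<open>derives P r0 w1\<close> \<open>derives P \<alpha>' w2\<close>] by simp
  ultimately show ?case by (metis map_append)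
qed auto

lemma context_free_iff_derives:
  "context_free L \<longleftrightarrow> (\<exists>(P :: (nat \<times> ('a::finite + nat) list) set) S. finite P \<and> L = {w. derives P [Inr S] w})"
  unfolding context_free_def cfg_lang_eq_derives ..

lemma context_free_image_derives:
  fixes P :: "('n::countable \<times> ('t::finite + 'n) list) set" and f :: "'t \<Rightarrow> 's::finite"
  assumes "finite P"
  shows "context_free (map f ` {w. derives P [Inr S] w})"
proof -
  let ?P = "map_grammar f to_nat P"
  have "{v. derives ?P [Inr (to_nat S)] v} = map f ` {w. derives P [Inr S] w}"
  proof (intro set_eqI iffI)
    fix v assume "v \<in> {v. derives ?P [Inr (to_nat S)] v}"
    then have "derives ?P [Inr (to_nat S)] v" by simp
    from derives_map_grammar_inv[OF this inj_to_nat, of "[Inr S]"]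
    show "v \<in> map f ` {w. derives P [Inr S] w}" by auto
  next
    fix v assume "v \<in> map f ` {w. derives P [Inr S] w}"
    then obtain w where "v = map f w" "derives P [Inr S] w" by blast
    from derives_map_grammar[OF this(2), of f to_nat] \<open>v = map f w\<close>
    show "v \<in> {v. derives ?P [Inr (to_nat S)] v}" by simp
  qed
  moreover have "finite ?P" using assms unfolding map_grammar_def by simp
  ultimately show ?thesis unfolding context_free_iff_derives by blast
qed

lemma context_free_derives:
  fixes P :: "('n::countable \<times> ('t::finite + 'n) list) set"
  shows "finite P \<Longrightarrow> context_free {w. derives P [Inr S] w}"
  using context_free_image_derives[of P id S] by simp

lemma context_free_image_map:
  fixes f :: "'a::finite \<Rightarrow> 'b::finite"
  shows "context_free L \<Longrightarrow> context_free (map f ` L)"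
  unfolding context_free_iff_derives[of L] using context_free_image_derives by blast

section \<open>Inverse images under erasing codings\<close>

definition starts_coded :: "('b \<Rightarrow> 'a option) \<Rightarrow> 'b list \<Rightarrow> bool" where
  "starts_coded g w \<longleftrightarrow> w = [] \<or> g (hd w) \<noteq> None"

lemma map_filter_append [simp]:
  "List.map_filter g (xs @ ys) = List.map_filter g xs @ List.map_filter g ys"
  by (simp add: List.map_filter_def)

lemma map_filter_eq_Nil_iff: "List.map_filter g w = [] \<longleftrightarrow> (\<forall>b\<in>set w. g b = None)"
  by (induction w) (auto split: option.split)

lemma map_filter_eq_ConsE:
  assumes "List.map_filter g w = a # y" "starts_coded g w"
  obtains b k w' where "w = b # k @ w'" "g b = Some a" "List.map_filter g k = []"
    "List.map_filter g w' = y" "starts_coded g w'"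
proof -
  from assms obtain b w0 where w: "w = b # w0" "g b \<noteq> None"
    by (cases w) (auto simp: starts_coded_def)
  with assms(1) have "g b = Some a" "List.map_filter g w0 = y" by (auto split: option.splits)
  let ?k = "takeWhile (\<lambda>c. g c = None) w0" and ?w' = "dropWhile (\<lambda>c. g c = None) w0"
  have "List.map_filter g ?k = []" by (auto simp: map_filter_eq_Nil_iff dest: set_takeWhileD)
  with \<open>List.map_filter g w0 = y\<close> have "List.map_filter g ?w' = y"
    by (metis map_filter_append self_append_conv2 takeWhile_dropWhile_id)
  moreover have "starts_coded g ?w'"
    unfolding starts_coded_def using hd_dropWhile by blast
  ultimately show thesis
    using that[of b ?k ?w'] w(1) \<open>g b = Some a\<close> \<open>List.map_filter g ?k = []\<close> by simp
qed

lemma map_filter_eq_appendE: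
  assumes "List.map_filter g w = x @ y" "starts_coded g w"
  obtains w1 w2 where "w = w1 @ w2" "List.map_filter g w1 = x" "List.map_filter g w2 = y"
    "starts_coded g w1" "starts_coded g w2"
  using assms
proof (induction x arbitrary: w thesis)
  case Nil
  then show ?case by (intro Nil.prems(1)[of "[]" w]) (auto simp: starts_coded_def)
next
  case (Cons a x)
  from Cons.prems(2,3) obtain b k w' where w: "w = b # k @ w'" "g b = Some a" "List.map_filter g k = []"
    "List.map_filter g w' = x @ y" "starts_coded g w'"
    by (auto elim: map_filter_eq_ConsE)
  from Cons.IH[OF _ w(4,5)] obtain w1 w2 where "w' = w1 @ w2" "List.map_filter g w1 = x"
    "List.map_filter g w2 = y" "starts_coded g w2"
    by blast
  with w show ?case
    by (intro Cons.prems(1)[of "b # k @ w1" w2]) (auto simp: starts_coded_def)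
qed

datatype ('n, 'a) preimage_nt = Orig 'n | Letter 'a | Skip | Start

instance preimage_nt :: (countable, countable) countable
  by countable_datatype

fun preimage_symbol :: "'a + 'n \<Rightarrow> 'b + ('n, 'a) preimage_nt" where
  "preimage_symbol (Inl a) = Inr (Letter a)"
| "preimage_symbol (Inr A) = Inr (Orig A)"

lemma Inl_neq_preimage_symbol [simp]: "Inl b \<noteq> preimage_symbol x"
  by (cases x) auto

text \<open>\<open>Skip\<close> derives the words of erased letters and \<open>Letter a\<close> a letter coding \<open>a\<close> followed by
  such a word; only the start rule produces a leading block of erased letters, which is why the
  completeness lemma below requires \<open>starts_coded\<close>.\<close>

definition preimage_grammar :: "('b \<Rightarrow> 'a option) \<Rightarrow> ('n \<times> ('a + 'n) list) set \<Rightarrow> 'n \<Rightarrow>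
    (('n, 'a) preimage_nt \<times> ('b + ('n, 'a) preimage_nt) list) set" where
  "preimage_grammar g P S =
     (\<lambda>(A, r). (Orig A, map preimage_symbol r)) ` P
   \<union> (\<lambda>b. (Letter (the (g b)), [Inl b, Inr Skip])) ` {b. g b \<noteq> None}
   \<union> insert (Skip, []) ((\<lambda>b. (Skip, [Inl b, Inr Skip])) ` {b. g b = None})
   \<union> {(Start, [Inr Skip, Inr (Orig S)])}"

context
  fixes g :: "'b \<Rightarrow> 'a option" and P :: "('n \<times> ('a + 'n) list) set" and S :: 'n
begin

abbreviation "G \<equiv> preimage_grammar g P S"

lemma preimage_grammar_Orig_iff: "(Orig A, r) \<in> G \<longleftrightarrow> (\<exists>r0. (A, r0) \<in> P \<and> r = map preimage_symbol r0)"
  by (auto simp: preimage_grammar_def)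

lemma preimage_grammar_Letter_iff: "(Letter a, r) \<in> G \<longleftrightarrow> (\<exists>b. g b = Some a \<and> r = [Inl b, Inr Skip])"
  by (force simp: preimage_grammar_def image_iff)

lemma preimage_grammar_Skip_iff: "(Skip, r) \<in> G \<longleftrightarrow> r = [] \<or> (\<exists>b. g b = None \<and> r = [Inl b, Inr Skip])"
  by (auto simp: preimage_grammar_def)

lemma preimage_grammar_Start_iff: "(Start, r) \<in> G \<longleftrightarrow> r = [Inr Skip, Inr (Orig S)]"
  by (auto simp: preimage_grammar_def)

lemma derives_Skip_iff: "derives G [Inr Skip] w \<longleftrightarrow> List.map_filter g w = []"
proof (induction w)
  case Nil
  have "(Skip, []) \<in> G" by (simp add: preimage_grammar_Skip_iff)
  then show ?case by (auto simp: derives_single_Inr_iff)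
next
  case (Cons c w)
  have "derives G [Inr Skip] (c # w) \<longleftrightarrow> (\<exists>r. (Skip, r) \<in> G \<and> derives G r (c # w))"
    by (rule derives_single_Inr_iff)
  also have "\<dots> \<longleftrightarrow> (\<exists>b. g b = None \<and> derives G [Inl b, Inr Skip] (c # w))"
    by (auto simp: preimage_grammar_Skip_iff)
  also have "\<dots> \<longleftrightarrow> g c = None \<and> derives G [Inr Skip] w"
    by (simp add: derives_Cons_Inl_iff)
  finally show ?case using Cons.IH by (simp split: option.split)
qed

lemma derives_Letter_iff:
  "derives G [Inr (Letter a)] w \<longleftrightarrow> (\<exists>b k. w = b # k \<and> g b = Some a \<and> List.map_filter g k = [])"
proof -
  have "derives G [Inr (Letter a)] w \<longleftrightarrow> (\<exists>r. (Letter a, r) \<in> G \<and> derives G r w)"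
    by (rule derives_single_Inr_iff)
  also have "\<dots> \<longleftrightarrow> (\<exists>b. g b = Some a \<and> derives G [Inl b, Inr Skip] w)"
    by (auto simp: preimage_grammar_Letter_iff)
  finally show ?thesis by (auto simp: derives_Cons_Inl_iff derives_Skip_iff)
qed

lemma derives_preimage_grammar_sound:
  "derives G \<beta> w \<Longrightarrow> \<beta> = map preimage_symbol \<alpha> \<Longrightarrow> derives P \<alpha> (List.map_filter g w)"
proof (induction arbitrary: \<alpha> rule: derives.induct)
  case (derives_Inl \<beta> w b)
  then show ?case by (auto simp: Cons_eq_map_conv)
next
  case (derives_Inr X r w1 \<beta> w2)
  from derives_Inr.prems obtain x \<alpha>' where \<alpha>: "\<alpha> = x # \<alpha>'" "Inr X = (preimage_symbol x :: 'b + _)"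
    "\<beta> = map preimage_symbol \<alpha>'"
    by (cases \<alpha>) auto
  have IH: "derives P \<alpha>' (List.map_filter g w2)" using derives_Inr.IH(2) \<alpha>(3) .
  show ?case
  proof (cases x)
    case (Inl a)
    with \<alpha>(2) have "X = Letter a" by simp
    with derives_Inr.hyps(1,2) have "derives G [Inr (Letter a)] w1"
      unfolding derives_single_Inr_iff by auto
    then have "List.map_filter g w1 = [a]" by (auto simp: derives_Letter_iff)
    with IH \<alpha>(1) Inl show ?thesis by (simp add: derives_Cons_Inl_iff)
  next
    case (Inr B)
    with \<alpha>(2) have "X = Orig B" by simp
    with derives_Inr.hyps(1) obtain r0 where "(B, r0) \<in> P" "r = map preimage_symbol r0"
      by (auto simp: preimage_grammar_Orig_iff)
    with derives_Inr.IH(1) have "derives P r0 (List.map_filter g w1)" by simp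
    from derives.derives_Inr[OF \<open>(B, r0) \<in> P\<close> this IH] \<alpha>(1) Inr show ?thesis by simp
  qed
qed simp

lemma derives_preimage_grammar_complete:
  "derives P \<alpha> v \<Longrightarrow> List.map_filter g w = v \<Longrightarrow> starts_coded g w \<Longrightarrow> derives G (map preimage_symbol \<alpha>) w"
proof (induction arbitrary: w rule: derives.induct)
  case derives_Nil
  then show ?case by (cases w) (auto simp: starts_coded_def split: option.split_asm)
next
  case (derives_Inl \<alpha> v a)
  obtain b k w' where w: "w = b # k @ w'" "g b = Some a" "List.map_filter g k = []"
    "List.map_filter g w' = v" "starts_coded g w'"
    using derives_Inl.prems(1,2) by (rule map_filter_eq_ConsE)
  have "derives G [Inr (Letter a)] (b # k)" using w(2,3) by (simp add: derives_Letter_iff)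
  from derives_append[OF this derives_Inl.IH[OF w(4,5)]] w(1) show ?case by simp
next
  case (derives_Inr A r v1 \<alpha> v2)
  obtain w1 w2 where w: "w = w1 @ w2" "List.map_filter g w1 = v1"
    "List.map_filter g w2 = v2" "starts_coded g w1" "starts_coded g w2"
    using derives_Inr.prems(1,2) by (rule map_filter_eq_appendE)
  have "(Orig A, map preimage_symbol r) \<in> G"
    using derives_Inr.hyps(1) by (auto simp: preimage_grammar_Orig_iff)
  from derives.derives_Inr[OF this derives_Inr.IH(1)[OF w(2,4)] derives_Inr.IH(2)[OF w(3,5)]] w(1)
  show ?case by simp
qed

lemma derives_preimage_grammar_Start_iff:
  "derives G [Inr Start] w \<longleftrightarrow> derives P [Inr S] (List.map_filter g w)"
proof
  assume "derives G [Inr Start] w"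
  then have "derives G ([Inr Skip] @ [Inr (Orig S)]) w"
    by (simp add: derives_single_Inr_iff preimage_grammar_Start_iff)
  then obtain w1 w2 where "w = w1 @ w2" "derives G [Inr Skip] w1" "derives G [Inr (Orig S)] w2"
    unfolding derives_append_iff by blast
  moreover from \<open>derives G [Inr (Orig S)] w2\<close>
  have "derives P [Inr S] (List.map_filter g w2)"
    by (rule derives_preimage_grammar_sound) simp
  ultimately show "derives P [Inr S] (List.map_filter g w)" by (simp add: derives_Skip_iff)
next
  assume "derives P [Inr S] (List.map_filter g w)"
  let ?w1 = "takeWhile (\<lambda>c. g c = None) w" and ?w2 = "dropWhile (\<lambda>c. g c = None) w"
  have "List.map_filter g ?w1 = []"
    by (auto simp: map_filter_eq_Nil_iff dest: set_takeWhileD)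
  then have "derives G [Inr Skip] ?w1" by (simp add: derives_Skip_iff)
  moreover have "derives G (map preimage_symbol [Inr S]) ?w2"
  proof (rule derives_preimage_grammar_complete[OF _ refl])
    show "derives P [Inr S] (List.map_filter g ?w2)"
      using \<open>derives P [Inr S] _\<close> \<open>List.map_filter g ?w1 = []\<close>
      by (metis map_filter_append self_append_conv2 takeWhile_dropWhile_id)
    show "starts_coded g ?w2"
      unfolding starts_coded_def using hd_dropWhile by blast
  qed
  ultimately have "derives G ([Inr Skip] @ [Inr (Orig S)]) (?w1 @ ?w2)"
    using derives_append by fastforce
  then show "derives G [Inr Start] w"
    by (simp add: derives_single_Inr_iff preimage_grammar_Start_iff)
qed

end

lemma context_free_preimage_map_filter:
  fixes g :: "'b::finite \<Rightarrow> 'a::finite option"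
  assumes "context_free L"
  shows "context_free {w. List.map_filter g w \<in> L}"
proof -
  from assms obtain P S where P: "finite (P :: (nat \<times> _) set)" "L = {w. derives P [Inr S] w}"
    unfolding context_free_iff_derives by blast
  have "finite (preimage_grammar g P S)"
    using P(1) unfolding preimage_grammar_def by auto
  then have "context_free {w. derives (preimage_grammar g P S) [Inr Start] w}"
    by (rule context_free_derives)
  with P(2) show ?thesis by (simp add: derives_preimage_grammar_Start_iff)
qed

section \<open>Intersection with a regular language\<close>

fun state_annotations ::
    "('q \<Rightarrow> 't \<Rightarrow> 'q) \<Rightarrow> 'q set \<Rightarrow> 'q \<Rightarrow> ('t + 'n) list \<Rightarrow> 'q \<Rightarrow> ('t + ('q \<times> 'n \<times> 'q) option) list set" where
  "state_annotations d Q p [] q = (if p = q then {[]} else {})"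
| "state_annotations d Q p (Inl a # r) q = (#) (Inl a) ` state_annotations d Q (d p a) r q"
| "state_annotations d Q p (Inr B # r) q =
     (\<Union>s\<in>Q. (#) (Inr (Some (p, B, s))) ` state_annotations d Q s r q)"

text \<open>The triple grammar: \<open>Some (p, A, q)\<close> derives the words derived by \<open>A\<close> on which the automaton
  runs from \<open>p\<close> to \<open>q\<close>; \<open>None\<close> is the start symbol.\<close>

definition product_grammar :: "('q \<Rightarrow> 't \<Rightarrow> 'q) \<Rightarrow> 'q set \<Rightarrow> 'q \<Rightarrow> 'q set \<Rightarrow> ('n \<times> ('t + 'n) list) set \<Rightarrow> 'n \<Rightarrow>
    (('q \<times> 'n \<times> 'q) option \<times> ('t + ('q \<times> 'n \<times> 'q) option) list) set" where
  "product_grammar d Q q0 F P S =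
     (\<Union>(A, r)\<in>P. \<Union>p\<in>Q. \<Union>q\<in>Q. (\<lambda>r'. (Some (p, A, q), r')) ` state_annotations d Q p r q)
   \<union> (\<lambda>f. (None, [Inr (Some (q0, S, f))])) ` F"

lemma finite_state_annotations: "finite Q \<Longrightarrow> finite (state_annotations d Q p r q)"
proof (induction r arbitrary: p)
  case (Cons x r)
  then show ?case by (cases x) auto
qed simp

lemma finite_product_grammar: "finite P \<Longrightarrow> finite Q \<Longrightarrow> F \<subseteq> Q \<Longrightarrow> finite (product_grammar d Q q0 F P S)"
  unfolding product_grammar_def by (auto intro: finite_state_annotations dest: finite_subset)

lemma Nil_in_state_annotations_iff: "[] \<in> state_annotations d Q p r q \<longleftrightarrow> r = [] \<and> p = q"
  by (cases r; cases "hd r") auto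

lemma Inl_Cons_in_state_annotations_iff:
  "Inl a # \<beta> \<in> state_annotations d Q p r q \<longleftrightarrow> (\<exists>r'. r = Inl a # r' \<and> \<beta> \<in> state_annotations d Q (d p a) r' q)"
  by (cases r; cases "hd r") auto

lemma Inr_Cons_in_state_annotations_iff:
  "Inr X # \<beta> \<in> state_annotations d Q p r q \<longleftrightarrow>
    (\<exists>B s r'. r = Inr B # r' \<and> X = Some (p, B, s) \<and> s \<in> Q \<and> \<beta> \<in> state_annotations d Q s r' q)"
  by (cases r; cases "hd r") auto

lemma product_grammar_Some_iff:
  "(Some (p, B, s), r) \<in> product_grammar d Q q0 F P S \<longleftrightarrow>
    (\<exists>r0. (B, r0) \<in> P \<and> p \<in> Q \<and> s \<in> Q \<and> r \<in> state_annotations d Q p r0 s)"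
  unfolding product_grammar_def by blast

lemma product_grammar_None_iff:
  "(None, r) \<in> product_grammar d Q q0 F P S \<longleftrightarrow> (\<exists>f\<in>F. r = [Inr (Some (q0, S, f))])"
  unfolding product_grammar_def by auto

lemma foldl_closed: "\<forall>q\<in>Q. \<forall>a. d q a \<in> Q \<Longrightarrow> p \<in> Q \<Longrightarrow> foldl d p w \<in> Q"
  by (induction w arbitrary: p) auto

lemma derives_product_grammar_sound:
  "derives (product_grammar d Q q0 F P S) \<beta> w \<Longrightarrow> \<beta> \<in> state_annotations d Q p \<alpha> q \<Longrightarrow>
    derives P \<alpha> w \<and> foldl d p w = q"
proof (induction arbitrary: p \<alpha> q rule: derives.induct)
  case derives_Nil
  then show ?case by (simp add: Nil_in_state_annotations_iff)
next
  case (derives_Inl \<beta> w a)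
  then show ?case by (auto simp: Inl_Cons_in_state_annotations_iff intro: derives.derives_Inl)
next
  case (derives_Inr X r w1 \<beta> w2)
  from derives_Inr.prems obtain B s \<alpha>' where \<alpha>: "\<alpha> = Inr B # \<alpha>'" "X = Some (p, B, s)"
    "\<beta> \<in> state_annotations d Q s \<alpha>' q"
    by (auto simp: Inr_Cons_in_state_annotations_iff)
  with derives_Inr.hyps(1) obtain r0 where "(B, r0) \<in> P" "r \<in> state_annotations d Q p r0 s"
    by (auto simp: product_grammar_Some_iff)
  with derives_Inr.IH \<alpha> show ?case by (auto intro: derives.derives_Inr)
qed

lemma derives_product_grammar_complete:
  assumes "derives P \<alpha> w" "\<forall>q\<in>Q. \<forall>a. d q a \<in> Q" "p \<in> Q"
  shows "\<exists>\<beta> \<in> state_annotations d Q p \<alpha> (foldl d p w). derives (product_grammar d Q q0 F P S) \<beta> w"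
  using assms(1,3)
proof (induction arbitrary: p rule: derives.induct)
  case derives_Nil
  show ?case by (auto intro: derives.derives_Nil)
next
  case (derives_Inl \<alpha> w a)
  from assms(2) derives_Inl.prems have "d p a \<in> Q" by blast
  with derives_Inl.IH obtain \<beta> where "\<beta> \<in> state_annotations d Q (d p a) \<alpha> (foldl d (d p a) w)"
    "derives (product_grammar d Q q0 F P S) \<beta> w" by blast
  then have "Inl a # \<beta> \<in> state_annotations d Q p (Inl a # \<alpha>) (foldl d p (a # w))"
    and "derives (product_grammar d Q q0 F P S) (Inl a # \<beta>) (a # w)"
    by (auto intro: derives.derives_Inl)
  then show ?case by blast
next
  case (derives_Inr A r w1 \<alpha> w2)
  define s where "s = foldl d p w1"
  have "s \<in> Q" unfolding s_def using assms(2) derives_Inr.prems by (rule foldl_closed)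
  from derives_Inr.IH(1)[OF derives_Inr.prems] obtain \<beta>1 where
    "\<beta>1 \<in> state_annotations d Q p r s" "derives (product_grammar d Q q0 F P S) \<beta>1 w1"
    unfolding s_def by blast
  moreover from derives_Inr.IH(2)[OF \<open>s \<in> Q\<close>] obtain \<beta>2 where
    "\<beta>2 \<in> state_annotations d Q s \<alpha> (foldl d s w2)" "derives (product_grammar d Q q0 F P S) \<beta>2 w2"
    by blast
  moreover have "(Some (p, A, s), \<beta>1) \<in> product_grammar d Q q0 F P S"
    using derives_Inr.hyps(1) derives_Inr.prems \<open>s \<in> Q\<close> calculation(1)
    by (auto simp: product_grammar_Some_iff)
  ultimately have "derives (product_grammar d Q q0 F P S) (Inr (Some (p, A, s)) # \<beta>2) (w1 @ w2)"
    and "Inr (Some (p, A, s)) # \<beta>2 \<in> state_annotations d Q p (Inr A # \<alpha>) (foldl d p (w1 @ w2))"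
    using \<open>s \<in> Q\<close> by (auto simp: s_def intro: derives.derives_Inr)
  then show ?case by blast
qed

lemma derives_product_grammar_None_iff:
  assumes "\<forall>q\<in>Q. \<forall>a. d q a \<in> Q" "q0 \<in> Q" "F \<subseteq> Q"
  shows "derives (product_grammar d Q q0 F P S) [Inr None] w \<longleftrightarrow> derives P [Inr S] w \<and> foldl d q0 w \<in> F"
proof
  assume "derives (product_grammar d Q q0 F P S) [Inr None] w"
  then obtain f where "f \<in> F" "derives (product_grammar d Q q0 F P S) [Inr (Some (q0, S, f))] w"
    by (auto simp: derives_single_Inr_iff product_grammar_None_iff)
  moreover have "[Inr (Some (q0, S, f))] \<in> state_annotations d Q q0 [Inr S] f"
    using \<open>f \<in> F\<close> assms(3) by auto
  ultimately show "derives P [Inr S] w \<and> foldl d q0 w \<in> F"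
    using derives_product_grammar_sound[of d Q q0 F P S _ w q0 "[Inr S]" f] by auto
next
  assume w: "derives P [Inr S] w \<and> foldl d q0 w \<in> F"
  obtain \<beta> where "\<beta> \<in> state_annotations d Q q0 [Inr S] (foldl d q0 w)"
    "derives (product_grammar d Q q0 F P S) \<beta> w"
    using derives_product_grammar_complete[OF conjunct1[OF w] assms(1,2)] by blast
  moreover from calculation(1) have "\<beta> = [Inr (Some (q0, S, foldl d q0 w))]"
    by (auto split: if_splits)
  with w have "(None, \<beta>) \<in> product_grammar d Q q0 F P S"
    by (auto simp: product_grammar_None_iff)
  ultimately show "derives (product_grammar d Q q0 F P S) [Inr None] w"
    using derives_single_Inr_iff[of "product_grammar d Q q0 F P S" None w] by blast
qed

lemma context_free_Int_dfa:
  fixes d :: "'q::countable \<Rightarrow> 'a::finite \<Rightarrow> 'q"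
  assumes "context_free L" "finite Q" "\<forall>q\<in>Q. \<forall>a. d q a \<in> Q" "q0 \<in> Q" "F \<subseteq> Q"
  shows "context_free (L \<inter> {w. foldl d q0 w \<in> F})"
proof -
  from assms(1) obtain P S where P: "finite (P :: (nat \<times> _) set)" "L = {w. derives P [Inr S] w}"
    unfolding context_free_iff_derives by blast
  from finite_product_grammar[OF P(1) assms(2,5)]
  have "context_free {w. derives (product_grammar d Q q0 F P S) [Inr None] w}"
    by (rule context_free_derives)
  with P(2) show ?thesis by (simp add: derives_product_grammar_None_iff[OF assms(3-5)] Collect_conj_eq)
qed

lemma context_free_Int_regular_preimage:
  fixes g :: "'b::finite \<Rightarrow> 'a::finite option"
  assumes "context_free L" "regular_lang B"
  shows "context_free (L \<inter> {w. List.map_filter g w \<in> B})"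
proof -
  from assms(2) obtain Q q0 d F where B: "finite (Q :: nat set)" "q0 \<in> Q" "\<forall>q\<in>Q. \<forall>a. d q a \<in> Q" "F \<subseteq> Q"
    "B = {w. foldl d q0 w \<in> F}"
    unfolding regular_lang_def by blast
  define d' where "d' q b = (case g b of None \<Rightarrow> q | Some a \<Rightarrow> d q a)" for q b
  have run: "foldl d' q w = foldl d q (List.map_filter g w)" for q w
    by (induction w arbitrary: q) (auto simp: d'_def split: option.split)
  have closed: "\<forall>q\<in>Q. \<forall>b. d' q b \<in> Q"
    using B(3) by (auto simp: d'_def split: option.split)
  from context_free_Int_dfa[OF assms(1) B(1) closed B(2,4)] show ?thesis
    by (simp add: run B(5))
qed

section \<open>Words tagged with their factor\<close>

datatype slot = X1 | U | Z | V | X2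

instance slot :: finite
proof
  have "(UNIV :: slot set) = {X1, U, Z, V, X2}" by (auto intro: slot.exhaust)
  then show "finite (UNIV :: slot set)" by (metis finite.emptyI finite.insertI)
qed

instance slot :: countable
  by countable_datatype

definition tagged :: "slot \<Rightarrow> 'a list \<Rightarrow> ('a \<times> slot) list" where
  "tagged t xs = map (\<lambda>a. (a, t)) xs"

lemma tagged_Nil [simp]: "tagged t [] = []"
  by (simp add: tagged_def)

lemma tagged_Cons: "tagged t (a # xs) = (a, t) # tagged t xs"
  by (simp add: tagged_def)

definition slot_step :: "slot option \<Rightarrow> slot \<Rightarrow> slot option" where
  "slot_step s t = (if s = Some t \<or> (s, t) \<in> {(Some X1, U), (Some U, Z), (Some U, V), (Some Z, V), (Some V, X2)}
    then Some t else None)"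

definition slots_accept :: "slot option \<Rightarrow> ('a \<times> slot) list \<Rightarrow> bool" where
  "slots_accept s w \<longleftrightarrow> foldl slot_step s (map snd w) \<in> {Some V, Some X2}"

lemma foldl_slot_step_None [simp]: "foldl slot_step None ts = None"
  by (induction ts) (simp_all add: slot_step_def)

lemma slots_accept_ConsE:
  assumes "slots_accept (Some s) ((a, t) # w)"
  obtains "t = s" "slots_accept (Some s) w"
    | "(s, t) \<in> {(X1, U), (U, Z), (U, V), (Z, V), (V, X2)}" "slots_accept (Some t) w"
  using assms by (auto simp: slots_accept_def slot_step_def split: if_splits)

lemma slots_accept_X2: "slots_accept (Some X2) w \<Longrightarrow> w = tagged X2 (map fst w)"
proof (induction w)
  case (Cons x w)
  obtain a t where "x = (a, t)" by fastforce
  with Cons show ?case by (auto elim: slots_accept_ConsE simp: tagged_Cons)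
qed simp

lemma slots_accept_V: "slots_accept (Some V) w \<Longrightarrow> \<exists>v x2. w = tagged V v @ tagged X2 x2"
proof (induction w)
  case Nil then show ?case by (metis append_Nil tagged_Nil)
next
  case (Cons x w)
  obtain a t where x: "x = (a, t)" by fastforce
  from Cons.prems[unfolded x] show ?case
  proof (cases rule: slots_accept_ConsE)
    case 1
    with Cons.IH obtain v x2 where "w = tagged V v @ tagged X2 x2" by blast
    with 1 x have "x # w = tagged V (a # v) @ tagged X2 x2" by (simp add: tagged_Cons)
    then show ?thesis by blast
  next
    case 2
    with slots_accept_X2 have "w = tagged X2 (map fst w)" by auto
    with 2 x have "x # w = tagged V [] @ tagged X2 (a # map fst w)" by (simp add: tagged_Cons)
    then show ?thesis by blast
  qed
qed

lemma slots_accept_Z: "slots_accept (Some Z) w \<Longrightarrow> \<exists>z v x2. v \<noteq> [] \<and> w = tagged Z z @ tagged V v @ tagged X2 x2"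
proof (induction w)
  case (Cons x w)
  obtain a t where x: "x = (a, t)" by fastforce
  from Cons.prems[unfolded x] show ?case
  proof (cases rule: slots_accept_ConsE)
    case 1
    with Cons.IH obtain z v x2 where "v \<noteq> []" "w = tagged Z z @ tagged V v @ tagged X2 x2" by blast
    with 1 x have "x # w = tagged Z (a # z) @ tagged V v @ tagged X2 x2" by (simp add: tagged_Cons)
    then show ?thesis using \<open>v \<noteq> []\<close> by blast
  next
    case 2
    then have "t = V" "slots_accept (Some V) w" by auto
    with slots_accept_V obtain v x2 where "w = tagged V v @ tagged X2 x2" by blast
    with x \<open>t = V\<close> have "x # w = tagged Z [] @ tagged V (a # v) @ tagged X2 x2" by (simp add: tagged_Cons)
    then show ?thesis by blast
  qed
qed (simp add: slots_accept_def)

lemma slots_accept_U: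
  "slots_accept (Some U) w \<Longrightarrow> \<exists>u z v x2. v \<noteq> [] \<and> w = tagged U u @ tagged Z z @ tagged V v @ tagged X2 x2"
proof (induction w)
  case (Cons x w)
  obtain a t where x: "x = (a, t)" by fastforce
  from Cons.prems[unfolded x] show ?case
  proof (cases rule: slots_accept_ConsE)
    case 1
    with Cons.IH obtain u z v x2 where "v \<noteq> []" "w = tagged U u @ tagged Z z @ tagged V v @ tagged X2 x2"
      by blast
    with 1 x have "x # w = tagged U (a # u) @ tagged Z z @ tagged V v @ tagged X2 x2" by (simp add: tagged_Cons)
    then show ?thesis using \<open>v \<noteq> []\<close> by blast
  next
    case 2
    then consider "t = Z" "slots_accept (Some Z) w" | "t = V" "slots_accept (Some V) w" by auto
    then show ?thesis
    proof cases
      case 1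
      with slots_accept_Z obtain z v x2 where "v \<noteq> []" "w = tagged Z z @ tagged V v @ tagged X2 x2" by blast
      with 1 x have "x # w = tagged U [] @ tagged Z (a # z) @ tagged V v @ tagged X2 x2" by (simp add: tagged_Cons)
      then show ?thesis using \<open>v \<noteq> []\<close> by blast
    next
      case 2
      with slots_accept_V obtain v x2 where "w = tagged V v @ tagged X2 x2" by blast
      with 2 x have "x # w = tagged U [] @ tagged Z [] @ tagged V (a # v) @ tagged X2 x2" by (simp add: tagged_Cons)
      then show ?thesis by blast
    qed
  qed
qed (simp add: slots_accept_def)

lemma slots_accept_X1:
  "slots_accept (Some X1) w \<Longrightarrow>
    \<exists>x1 u z v x2. u \<noteq> [] \<and> v \<noteq> [] \<and> w = tagged X1 x1 @ tagged U u @ tagged Z z @ tagged V v @ tagged X2 x2"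
proof (induction w)
  case (Cons x w)
  obtain a t where x: "x = (a, t)" by fastforce
  from Cons.prems[unfolded x] show ?case
  proof (cases rule: slots_accept_ConsE)
    case 1
    with Cons.IH obtain x1 u z v x2 where "u \<noteq> []" "v \<noteq> []"
      "w = tagged X1 x1 @ tagged U u @ tagged Z z @ tagged V v @ tagged X2 x2" by blast
    with 1 x have "x # w = tagged X1 (a # x1) @ tagged U u @ tagged Z z @ tagged V v @ tagged X2 x2"
      by (simp add: tagged_Cons)
    then show ?thesis using \<open>u \<noteq> []\<close> \<open>v \<noteq> []\<close> by blast
  next
    case 2
    then have "t = U" "slots_accept (Some U) w" by auto
    with slots_accept_U obtain u z v x2 where "v \<noteq> []" "w = tagged U u @ tagged Z z @ tagged V v @ tagged X2 x2"
      by blast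
    with x \<open>t = U\<close> have "x # w = tagged X1 [] @ tagged U (a # u) @ tagged Z z @ tagged V v @ tagged X2 x2"
      by (simp add: tagged_Cons)
    then show ?thesis using \<open>v \<noteq> []\<close> by blast
  qed
qed (simp add: slots_accept_def)

lemma foldl_slot_step_tagged:
  "slot_step s t = Some t \<Longrightarrow> foldl slot_step s (map snd (tagged t xs)) = (if xs = [] then s else Some t)"
  by (induction xs arbitrary: s) (auto simp: tagged_Cons slot_step_def)

lemma slots_accept_tagged:
  "u \<noteq> [] \<Longrightarrow> v \<noteq> [] \<Longrightarrow> slots_accept (Some X1) (tagged X1 x1 @ tagged U u @ tagged Z z @ tagged V v @ tagged X2 x2)"
  by (simp add: slots_accept_def foldl_slot_step_tagged slot_step_def)

lemma context_free_Int_slots_accept: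
  fixes L :: "('a::finite \<times> slot) list set"
  assumes "context_free L"
  shows "context_free (L \<inter> {w. slots_accept (Some X1) w})"
proof -
  have "context_free (L \<inter> {w. foldl (\<lambda>s x. slot_step s (snd x)) (Some X1) w \<in> {Some V, Some X2}})"
    by (rule context_free_Int_dfa[OF assms, where Q = UNIV]) auto
  then show ?thesis by (simp add: slots_accept_def foldl_map)
qed

definition outer_letter :: "'a \<times> slot \<Rightarrow> 'a option" where
  "outer_letter x = (if snd x = Z then None else Some (fst x))"

definition inner_letter :: "'a \<times> slot \<Rightarrow> 'a option" where
  "inner_letter x = (if snd x = X1 \<or> snd x = X2 then None else Some (fst x))"

lemma map_filter_outer_letter_tagged [simp]:
  "List.map_filter outer_letter (tagged t xs) = (if t = Z then [] else xs)"
  by (induction xs) (auto simp: tagged_Cons outer_letter_def)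

lemma map_filter_inner_letter_tagged [simp]:
  "List.map_filter inner_letter (tagged t xs) = (if t = X1 \<or> t = X2 then [] else xs)"
  by (induction xs) (auto simp: tagged_Cons inner_letter_def)

lemma map_fst_tagged [simp]: "map fst (tagged t xs) = xs"
  by (simp add: tagged_def comp_def)

lemma outfix_ins_lang_eq_image:
  "outfix_ins_lang A B =
    map fst ` {w. slots_accept (Some X1) w \<and> List.map_filter outer_letter w \<in> A \<and> List.map_filter inner_letter w \<in> B}"
  (is "_ = map fst ` ?W")
proof (intro set_eqI iffI)
  fix s assume "s \<in> outfix_ins_lang A B"
  then obtain x1 u z v x2 where s: "s = x1 @ u @ z @ v @ x2" "x1 @ u @ v @ x2 \<in> A" "u @ z @ v \<in> B"
    "u \<noteq> []" "v \<noteq> []"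
    unfolding outfix_ins_lang_def outfix_ins_def by blast
  let ?w = "tagged X1 x1 @ tagged U u @ tagged Z z @ tagged V v @ tagged X2 x2"
  have "?w \<in> ?W" using s(2-5) by (simp add: slots_accept_tagged)
  moreover have "s = map fst ?w" using s(1) by simp
  ultimately show "s \<in> map fst ` ?W" by blast
next
  fix s assume "s \<in> map fst ` ?W"
  then obtain w where w: "s = map fst w" "w \<in> ?W" by blast
  then obtain x1 u z v x2 where "u \<noteq> []" "v \<noteq> []"
    "w = tagged X1 x1 @ tagged U u @ tagged Z z @ tagged V v @ tagged X2 x2"
    using slots_accept_X1 by blast
  with w have "s = x1 @ u @ z @ v @ x2" "x1 @ u @ v @ x2 \<in> A" "u @ z @ v \<in> B"
    by simp_all
  moreover from this(1) have "s \<in> outfix_ins (x1 @ u @ v @ x2) (u @ z @ v)"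
    unfolding outfix_ins_def using \<open>u \<noteq> []\<close> \<open>v \<noteq> []\<close> by blast
  ultimately show "s \<in> outfix_ins_lang A B"
    unfolding outfix_ins_lang_def by blast
qed

lemma context_free_slotted:
  fixes g g' :: "'a::finite \<times> slot \<Rightarrow> 'a option"
  assumes "context_free A" "regular_lang B"
  shows "context_free {w. slots_accept (Some X1) w \<and> List.map_filter g w \<in> A \<and> List.map_filter g' w \<in> B}"
proof -
  have "context_free ({w. List.map_filter g w \<in> A} \<inter> {w. List.map_filter g' w \<in> B} \<inter> {w. slots_accept (Some X1) w})"
    using assms by (intro context_free_Int_slots_accept context_free_Int_regular_preimage context_free_preimage_map_filter)
  then show ?thesis by (simp add: Collect_conj_eq Int_ac)
qed

theorem theorem5p3:
  fixes L1 L2 :: "('a::finite) list set"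
  assumes "context_free L1" and "regular_lang L2"
  shows "context_free (outfix_ins_lang L1 L2) \<and> context_free (outfix_ins_lang L2 L1)"
proof
  show "context_free (outfix_ins_lang L1 L2)"
    unfolding outfix_ins_lang_eq_image using context_free_slotted[OF assms] by (rule context_free_image_map)
  have "context_free {w. slots_accept (Some X1) w \<and> List.map_filter inner_letter w \<in> L1 \<and>
      List.map_filter outer_letter w \<in> L2}"
    using context_free_slotted[OF assms] .
  then show "context_free (outfix_ins_lang L2 L1)"
    unfolding outfix_ins_lang_eq_image by (simp add: conj_commute conj_left_commute context_free_image_map)
qed
end
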